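(* Let $G$ be a regular subsequential method of sequential convergence. If a subset $F$ of $\mathbb{R}$ is $G$-sequentially compact, then $F$ is Abel sequentially compact.
   Context: Let $s$ be the space of all real sequences. A method is a linear function $G$ defined on a linear subspace $c_G\subseteq s$ into $\mathbb{R}$; $\mathbf{p}$ is $G$-convergent to $\ell$ if $\mathbf{p}\in c_G$ and $G(\mathbf{p})=\ell$. $G$ is regular if every convergent sequence $\mathbf{p}$ is $G$-convergent with $G(\mathbf{p})=\lim\mathbf{p}$; $G$ is subsequential if whenever $G(\mathbf{p})=\ell$ there is a subsequence of $\mathbf{p}$ converging (in the ordinary sense) to $\ell$. $F$ is $G$-sequentially compact if every sequence of points of $F$ has a $G$-convergent subsequence $\mathbf{r}$ with $G(\mathbf{r})\in F$. A sequence $(p_n)_{n\ge0}$ is Abel convergent to $\ell$ if $\sum_{k=0}^{\infty}p_k x^k$ converges for every $0\le x<1$ and $\lim_{x\to 1^-}(1-x)\sum_{k=0}^{\infty}p_k x^k=\ell$. $F$ is Abel sequentially compact if every sequence of points of $F$ has a subsequence Abel convergent to a limit in $F$. *)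

theory Defs
  imports "HOL-Analysis.Analysis"
begin

definition is_method :: "(nat \<Rightarrow> real) set \<Rightarrow> ((nat \<Rightarrow> real) \<Rightarrow> real) \<Rightarrow> bool" where
  "is_method cG G \<longleftrightarrow>
     (\<lambda>n. 0) \<in> cG \<and>
     (\<forall>p\<in>cG. \<forall>q\<in>cG. (\<lambda>n. p n + q n) \<in> cG) \<and>
     (\<forall>c. \<forall>p\<in>cG. (\<lambda>n. c * p n) \<in> cG) \<and>
     (\<forall>p\<in>cG. \<forall>q\<in>cG. G (\<lambda>n. p n + q n) = G p + G q) \<and>
     (\<forall>c. \<forall>p\<in>cG. G (\<lambda>n. c * p n) = c * G p)"

definition G_regular :: "(nat \<Rightarrow> real) set \<Rightarrow> ((nat \<Rightarrow> real) \<Rightarrow> real) \<Rightarrow> bool" where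
  "G_regular cG G \<longleftrightarrow> (\<forall>p. convergent p \<longrightarrow> p \<in> cG \<and> G p = lim p)"

definition G_subsequential :: "(nat \<Rightarrow> real) set \<Rightarrow> ((nat \<Rightarrow> real) \<Rightarrow> real) \<Rightarrow> bool" where
  "G_subsequential cG G \<longleftrightarrow>
     (\<forall>p\<in>cG. \<exists>r::nat \<Rightarrow> nat. strict_mono r \<and> (p \<circ> r) \<longlonglongrightarrow> G p)"

definition G_seq_compact ::
  "(nat \<Rightarrow> real) set \<Rightarrow> ((nat \<Rightarrow> real) \<Rightarrow> real) \<Rightarrow> real set \<Rightarrow> bool" where
  "G_seq_compact cG G F \<longleftrightarrow>
     (\<forall>p. (\<forall>n. p n \<in> F) \<longrightarrow>
        (\<exists>r::nat \<Rightarrow> nat. strict_mono r \<and> (p \<circ> r) \<in> cG \<and> G (p \<circ> r) \<in> F))"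

definition Abel_convergent :: "(nat \<Rightarrow> real) \<Rightarrow> real \<Rightarrow> bool" where
  "Abel_convergent p l \<longleftrightarrow>
     (\<forall>x::real. 0 \<le> x \<and> x < 1 \<longrightarrow> summable (\<lambda>k. p k * x ^ k)) \<and>
     ((\<lambda>x. (1 - x) * (\<Sum>k. p k * x ^ k)) \<longlongrightarrow> l) (at_left 1)"

definition Abel_seq_compact :: "real set \<Rightarrow> bool" where
  "Abel_seq_compact F \<longleftrightarrow>
     (\<forall>p. (\<forall>n. p n \<in> F) \<longrightarrow>
        (\<exists>(r::nat \<Rightarrow> nat) l. strict_mono r \<and> l \<in> F \<and> Abel_convergent (p \<circ> r) l))"

end

theory Submission
  imports Defs
begin

text \<open>Every convergent sequence is Abel convergent to its limit (Abel summation is regular).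
  Hence, from a sequence in \<open>F\<close>, take a subsequence that is \<open>G\<close>-convergent to some
  \<open>\<ell> \<in> F\<close>; subsequentiality yields a further subsequence converging to \<open>\<ell>\<close>, which is
  then Abel convergent to \<open>\<ell>\<close>.\<close>

lemma summable_bounded_times_power:
  fixes a :: "nat \<Rightarrow> real"
  assumes "\<And>k. \<bar>a k\<bar> \<le> M" "0 \<le> x" "x < 1"
  shows "summable (\<lambda>k. a k * x ^ k)"
proof (rule summable_comparison_test')
  show "summable (\<lambda>k. M * x ^ k)"
    using assms by (intro summable_mult summable_geometric) auto
  show "norm (a n * x ^ n) \<le> M * x ^ n" for n
    using assms(1)[of n] assms(2) by (simp add: abs_mult mult_right_mono)
qed

lemma abs_suminf_times_power_le:
  fixes d :: "nat \<Rightarrow> real"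
  assumes tail: "\<And>k. k \<ge> N \<Longrightarrow> \<bar>d k\<bar> \<le> e" and x: "0 \<le> x" "x < 1"
  shows "\<bar>\<Sum>k. d k * x ^ k\<bar> \<le> (\<Sum>k<N. \<bar>d k\<bar>) + e / (1 - x)"
proof -
  define h where "h k = (if k \<in> {..<N} then \<bar>d k\<bar> else 0) + e * x ^ k" for k
  have h_sums: "h sums ((\<Sum>k<N. \<bar>d k\<bar>) + e * (1 / (1 - x)))"
    unfolding h_def
    by (intro sums_add sums_mult sums_If_finite_set geometric_sums) (use x in auto)
  have dominated: "\<bar>d k * x ^ k\<bar> \<le> h k" for k
  proof (cases "k < N")
    case True
    have "\<bar>d k\<bar> * x ^ k \<le> \<bar>d k\<bar>"
      using x by (intro mult_left_le power_le_one) auto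
    moreover have "0 \<le> e * x ^ k"
      using tail[of "max k N"] x by simp
    ultimately show ?thesis
      unfolding h_def using True x by (simp add: abs_mult)
  next
    case False
    then show ?thesis
      unfolding h_def using tail[of k] x by (simp add: abs_mult mult_right_mono)
  qed
  have abs_summable: "summable (\<lambda>k. \<bar>d k * x ^ k\<bar>)"
    by (rule summable_comparison_test'[OF sums_summable[OF h_sums]]) (simp add: dominated)
  have "\<bar>\<Sum>k. d k * x ^ k\<bar> \<le> (\<Sum>k. \<bar>d k * x ^ k\<bar>)"
    by (rule summable_rabs[OF abs_summable])
  also have "\<dots> \<le> (\<Sum>k. h k)"
    by (rule suminf_le[OF dominated abs_summable sums_summable[OF h_sums]])
  also have "\<dots> = (\<Sum>k<N. \<bar>d k\<bar>) + e / (1 - x)"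
    using sums_unique[OF h_sums] by simp
  finally show ?thesis .
qed

lemma Abel_mean_tendsto_zero:
  fixes d :: "nat \<Rightarrow> real"
  assumes "d \<longlonglongrightarrow> 0"
  shows "((\<lambda>x. (1 - x) * (\<Sum>k. d k * x ^ k)) \<longlongrightarrow> 0) (at_left 1)"
proof (rule tendstoI)
  fix e :: real assume e: "e > 0"
  obtain N where "\<And>k. k \<ge> N \<Longrightarrow> \<bar>d k\<bar> < e/2"
    using LIMSEQ_D[OF assms, of "e/2"] e by auto
  then have tail: "\<And>k. k \<ge> N \<Longrightarrow> \<bar>d k\<bar> \<le> e/2"
    by (simp add: less_imp_le)
  define B where "B = (\<Sum>k<N. \<bar>d k\<bar>)"
  have "B \<ge> 0" unfolding B_def by (intro sum_nonneg) auto
  \<comment> \<open>The head of the series contributes at most \<open>(1 - x) * B\<close>, the tail at most \<open>e/2\<close>.\<close>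
  define b where "b = max 0 (1 - e / (2 * (B + 1)))"
  have "b < 1" unfolding b_def using e \<open>B \<ge> 0\<close> by auto
  show "\<forall>\<^sub>F x in at_left 1. dist ((1 - x) * (\<Sum>k. d k * x ^ k)) 0 < e"
    using eventually_at_left_real[OF \<open>b < 1\<close>]
  proof (rule eventually_mono)
    fix x assume "x \<in> {b<..<1}"
    then have x: "0 \<le> x" "x < 1" and "1 - x < e / (2 * (B + 1))"
      unfolding b_def by auto
    then have "(1 - x) * (2 * (B + 1)) < e"
      using \<open>B \<ge> 0\<close> by (simp add: pos_less_divide_eq)
    then have small: "(1 - x) * B + e/2 < e"
      using x by (simp add: algebra_simps)
    have "\<bar>(1 - x) * (\<Sum>k. d k * x ^ k)\<bar> = (1 - x) * \<bar>\<Sum>k. d k * x ^ k\<bar>"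
      using x by (simp add: abs_mult)
    also have "\<dots> \<le> (1 - x) * (B + e/2 / (1 - x))"
      using abs_suminf_times_power_le[OF tail x] x unfolding B_def by (intro mult_left_mono) auto
    also have "\<dots> = (1 - x) * B + e/2"
      using x by (simp add: field_simps)
    finally show "dist ((1 - x) * (\<Sum>k. d k * x ^ k)) 0 < e"
      using small by simp
  qed
qed

lemma Abel_convergent_if_tendsto:
  fixes q :: "nat \<Rightarrow> real"
  assumes q: "q \<longlonglongrightarrow> l"
  shows "Abel_convergent q l"
proof -
  obtain K where K: "\<And>k. \<bar>q k\<bar> \<le> K"
    using BseqE[OF convergent_imp_Bseq[OF convergentI[OF q]]] by (metis real_norm_def)
  define d where "d k = q k - l" for k
  have d_bounded: "\<bar>d k\<bar> \<le> K + \<bar>l\<bar>" for k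
    using K[of k] unfolding d_def by linarith
  have "d \<longlonglongrightarrow> 0"
    unfolding d_def using tendsto_diff[OF q tendsto_const[of l]] by simp
  have summable: "summable (\<lambda>k. q k * x ^ k)" if "0 \<le> x" "x < 1" for x :: real
    using summable_bounded_times_power[OF K that] .
  have split: "(1 - x) * (\<Sum>k. q k * x ^ k) = (1 - x) * (\<Sum>k. d k * x ^ k) + l"
    if x: "0 < x" "x < 1" for x :: real
  proof -
    have "(\<Sum>k. q k * x ^ k) = (\<Sum>k. d k * x ^ k + l * x ^ k)"
      unfolding d_def by (simp add: algebra_simps)
    also have "\<dots> = (\<Sum>k. d k * x ^ k) + l * (1 / (1 - x))"
      using x summable_bounded_times_power[OF d_bounded, of x]
      by (simp add: suminf_add[symmetric] suminf_mult suminf_geometric summable_geometric)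
    finally show ?thesis using x by (simp add: field_simps)
  qed
  have "((\<lambda>x. (1 - x) * (\<Sum>k. d k * x ^ k) + l) \<longlongrightarrow> 0 + l) (at_left 1)"
    by (intro tendsto_add Abel_mean_tendsto_zero[OF \<open>d \<longlonglongrightarrow> 0\<close>] tendsto_const)
  moreover have "\<forall>\<^sub>F x in at_left 1. (1 - x) * (\<Sum>k. d k * x ^ k) + l
                                       = (1 - x) * (\<Sum>k. q k * x ^ k)"
    by (rule eventually_at_left_1) (simp add: split)
  ultimately have "((\<lambda>x. (1 - x) * (\<Sum>k. q k * x ^ k)) \<longlongrightarrow> l) (at_left 1)"
    by (simp add: tendsto_cong)
  then show ?thesis
    unfolding Abel_convergent_def using summable by blast
qed

theorem theorem13:
  fixes cG :: "(nat \<Rightarrow> real) set" and G :: "(nat \<Rightarrow> real) \<Rightarrow> real" and F :: "real set"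
  assumes "is_method cG G"
    and "G_regular cG G"
    and "G_subsequential cG G"
    and "G_seq_compact cG G F"
  shows "Abel_seq_compact F"
  unfolding Abel_seq_compact_def
proof (intro allI impI)
  fix p :: "nat \<Rightarrow> real" assume "\<forall>n. p n \<in> F"
  with assms(4) obtain r where r: "strict_mono r" "p \<circ> r \<in> cG" "G (p \<circ> r) \<in> F"
    unfolding G_seq_compact_def by blast
  with assms(3) obtain s where s: "strict_mono s" "(p \<circ> r \<circ> s) \<longlonglongrightarrow> G (p \<circ> r)"
    unfolding G_subsequential_def by blast
  have "strict_mono (r \<circ> s)"
    using r(1) s(1) by (rule strict_mono_o)
  moreover have "Abel_convergent (p \<circ> (r \<circ> s)) (G (p \<circ> r))"
    using Abel_convergent_if_tendsto[OF s(2)] by (simp add: o_assoc)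
  ultimately show "\<exists>r l. strict_mono r \<and> l \<in> F \<and> Abel_convergent (p \<circ> r) l"
    using r(3) by blast
qed

end
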